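(* Let $k,\ell \ge 2$ and $n \geq k+\ell$. Let $\mathcal F \subset \binom{[n]}{k}$ and $\mathcal G \subset \binom{[n]}{\ell}$ be cross-intersecting and saturated in the sense that every $k$-set meeting all members of $\mathcal G$ belongs to $\mathcal F$ and every $\ell$-set meeting all members of $\mathcal F$ belongs to $\mathcal G$. For a family $\mathcal H$ let $\mathcal T_2(\mathcal H) = \{\{i,j\} \in \binom{[n]}{2} : H \cap \{i,j\} \neq \emptyset \text{ for all } H \in \mathcal H\}$. Then $\mathcal T_2(\mathcal F)$ and $\mathcal T_2(\mathcal G)$ are cross-intersecting, i.e., every pair in $\mathcal T_2(\mathcal F)$ meets every pair in $\mathcal T_2(\mathcal G)$.
   Context: Families are cross-intersecting if every member of one meets every member of the other. *)

theory Defs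
  imports Main
begin

definition k_subsets :: "nat \<Rightarrow> nat \<Rightarrow> nat set set" where
  "k_subsets n k = {A. A \<subseteq> {1..n} \<and> card A = k}"

definition cross_intersecting :: "'a set set \<Rightarrow> 'a set set \<Rightarrow> bool" where
  "cross_intersecting F G \<longleftrightarrow> (\<forall>A\<in>F. \<forall>B\<in>G. A \<inter> B \<noteq> {})"

definition T2 :: "nat \<Rightarrow> nat set set \<Rightarrow> nat set set" where
  "T2 n H = {P \<in> k_subsets n 2. \<forall>X\<in>H. X \<inter> P \<noteq> {}}"

end

theory Submission
  imports Defs
begin

text \<open>If two transversal pairs \<open>P\<close> of \<open>F\<close> and \<open>Q\<close> of \<open>G\<close> were disjoint, pad \<open>Q\<close> with
  \<open>k - 2\<close> points outside \<open>P \<union> Q\<close> (possible as \<open>n \<ge> k + 2\<close>) to a \<open>k\<close>-set \<open>A\<close>. It meets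
  every member of \<open>G\<close> because \<open>Q\<close> does, so \<open>A \<in> F\<close> by saturation; but \<open>A\<close> misses the
  transversal \<open>P\<close> of \<open>F\<close>.\<close>

lemma k_subset_extending_avoiding:
  assumes "Q \<subseteq> {1..n}" and "P \<subseteq> {1..n}" and "P \<inter> Q = {}"
    and "card Q \<le> k" and "card P + k \<le> n"
  obtains A where "A \<in> k_subsets n k" and "Q \<subseteq> A" and "A \<inter> P = {}"
proof -
  have fin: "finite P" "finite Q"
    using assms(1,2) finite_subset by blast+
  have "card ({1..n} - (P \<union> Q)) = n - (card P + card Q)"
    using assms(1-3) fin by (simp add: card_Diff_subset card_Un_disjoint)
  then have "k - card Q \<le> card ({1..n} - (P \<union> Q))"
    using assms(4,5) by linarith
  then obtain S where S: "S \<subseteq> {1..n} - (P \<union> Q)" "card S = k - card Q"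
    using obtain_subset_with_card_n by metis
  have "finite S"
    using S(1) finite_subset by blast
  then have "card (Q \<union> S) = k"
    using S fin assms(4) by (subst card_Un_disjoint) auto
  then have "Q \<union> S \<in> k_subsets n k"
    using S(1) assms(1) unfolding k_subsets_def by auto
  moreover have "(Q \<union> S) \<inter> P = {}"
    using S(1) assms(3) by blast
  ultimately show thesis
    using that by blast
qed

lemma transversals_of_saturated_pair_intersect:
  assumes saturated: "\<And>A. A \<in> k_subsets n k \<Longrightarrow> (\<forall>B\<in>G. A \<inter> B \<noteq> {}) \<Longrightarrow> A \<in> F"
    and P: "P \<subseteq> {1..n}" "\<forall>X\<in>F. X \<inter> P \<noteq> {}"
    and Q: "Q \<subseteq> {1..n}" "\<forall>X\<in>G. X \<inter> Q \<noteq> {}"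
    and "card Q \<le> k" and "card P + k \<le> n"
  shows "P \<inter> Q \<noteq> {}"
proof
  assume "P \<inter> Q = {}"
  then obtain A where A: "A \<in> k_subsets n k" "Q \<subseteq> A" "A \<inter> P = {}"
    using k_subset_extending_avoiding P(1) Q(1) assms(6,7) by metis
  have "\<forall>B\<in>G. A \<inter> B \<noteq> {}"
    using Q(2) A(2) by blast
  then have "A \<in> F"
    using saturated A(1) by blast
  then show False
    using P(2) A(3) by blast
qed

theorem fact4p6:
  fixes n k l :: nat and F G :: "nat set set"
  assumes "k \<ge> 2" and "l \<ge> 2" and "n \<ge> k + l"
    and "F \<subseteq> k_subsets n k" and "G \<subseteq> k_subsets n l"
    and "cross_intersecting F G"
    and "\<And>A. A \<in> k_subsets n k \<Longrightarrow> (\<forall>B\<in>G. A \<inter> B \<noteq> {}) \<Longrightarrow> A \<in> F"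
    and "\<And>B. B \<in> k_subsets n l \<Longrightarrow> (\<forall>A\<in>F. A \<inter> B \<noteq> {}) \<Longrightarrow> B \<in> G"
  shows "cross_intersecting (T2 n F) (T2 n G)"
  unfolding cross_intersecting_def
proof (intro ballI)
  fix P Q assume "P \<in> T2 n F" and "Q \<in> T2 n G"
  then have "P \<subseteq> {1..n}" "card P = 2" "\<forall>X\<in>F. X \<inter> P \<noteq> {}"
    and "Q \<subseteq> {1..n}" "card Q = 2" "\<forall>X\<in>G. X \<inter> Q \<noteq> {}"
    unfolding T2_def k_subsets_def by auto
  moreover have "2 + k \<le> n"
    using assms(2,3) by linarith
  ultimately show "P \<inter> Q \<noteq> {}"
    using transversals_of_saturated_pair_intersect[OF assms(7)] assms(1) by simp
qed

end
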